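(* Let $X$ be a transient random walk on $\mathbf{Z}^d$ and $U(A):=\sum_{x\in A\cap\mathbf{Z}^d}g(0,x)$. Then $$\gamma_c=\limsup_{n\to\infty}n^{-1}\log_2U(\mathcal{V}_n),$$ where $\gamma_c:=\inf\{\gamma\in(0,d):\sum_{x\in\mathbf{Z}^d\setminus\{0\}}g(0,x)\|x\|^{-\gamma}<\infty\}$ with $\inf\varnothing:=d$.
   Context: A random walk on $\mathbf{Z}^d$ is $X_n=X_0+\xi_1+\cdots+\xi_n$ with $\xi_1,\xi_2,\dots$ i.i.d. $\mathbf{Z}^d$-valued; $P^a$ denotes its law when $X_0=a$. Its Green function is $g(a,x):=\sum_{n\ge0}P^a\{X_n=x\}$, and transience means $g$ is finite. For $k\ge0$, $\mathcal{V}_k:=[-2^k,2^k)^d$. $\|\cdot\|$ is the Euclidean norm. *)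

theory Defs
  imports "HOL-Probability.Probability"
begin

text \<open>Points of Z^d are integer vectors indexed by a finite type 'd (so d = CARD('d)). The law of X_n under P^0
  is the n-fold convolution of the step distribution.\<close>

primrec walk_law :: "(int ^ 'd) pmf \<Rightarrow> nat \<Rightarrow> (int ^ 'd) pmf" where
  "walk_law \<xi> 0 = return_pmf 0"
| "walk_law \<xi> (Suc n) = bind_pmf (walk_law \<xi> n) (\<lambda>x. map_pmf (\<lambda>s. x + s) \<xi>)"

definition walk_law_from :: "(int ^ 'd) pmf \<Rightarrow> int ^ 'd \<Rightarrow> nat \<Rightarrow> (int ^ 'd) pmf" where
  "walk_law_from \<xi> a n = map_pmf (\<lambda>y. a + y) (walk_law \<xi> n)"

definition green :: "(int ^ 'd) pmf \<Rightarrow> int ^ 'd \<Rightarrow> int ^ 'd \<Rightarrow> ennreal" where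
  "green \<xi> a x = (\<Sum>n. ennreal (pmf (walk_law_from \<xi> a n) x))"

definition transient :: "(int ^ 'd) pmf \<Rightarrow> bool" where
  "transient \<xi> \<longleftrightarrow> (\<forall>a x. green \<xi> a x \<noteq> \<infinity>)"

definition Ufun :: "(int ^ 'd) pmf \<Rightarrow> (int ^ 'd) set \<Rightarrow> ennreal" where
  "Ufun \<xi> A = (\<Sum>\<^sub>\<infinity>x\<in>A. green \<xi> 0 x)"

definition Vbox :: "nat \<Rightarrow> (int ^ 'd) set" where
  "Vbox k = {x. \<forall>i. - (2 ^ k) \<le> x $ i \<and> x $ i < 2 ^ k}"

definition znorm :: "int ^ 'd \<Rightarrow> real" where
  "znorm x = norm (\<chi> i. real_of_int (x $ i))"

definition gamma_c :: "(int ^ 'd) pmf \<Rightarrow> real" where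
  "gamma_c \<xi> = (let S = {\<gamma> \<in> {0<..<real CARD('d)}.
       (\<Sum>\<^sub>\<infinity>x\<in>UNIV - {0}. green \<xi> 0 x * ennreal (znorm x powr (- \<gamma>))) < \<infinity>}
     in if S = {} then real CARD('d) else Inf S)"

end

theory Submission
  imports Defs
begin

text \<open>The only property of the random walk that matters is that g(0,-) is a bounded nonnegative
  weight with g(0,0) >= 1: by the first-entrance decomposition, g(0,x) = P^0{X hits x} g(0,0) <= g(0,0).
  For such a weight, with U(n) = U(V_n), cut Z^d into the dyadic shells V_n - V_(n-1), on which
  ||x|| is comparable to 2^n. Then sum_x g(0,x) ||x||^-gamma is finite as soon as U(n) = O(2^(beta n))
  for some beta < gamma, and conversely its finiteness gives U(n) = O(2^(gamma n)). So the critical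
  exponent is the exponential growth rate of U(n); boundedness of g caps that rate by d.\<close>

lemma walk_law_from_Suc:
  "walk_law_from \<xi> a (Suc n) = bind_pmf (walk_law_from \<xi> a n) (\<lambda>z. map_pmf (\<lambda>s. z + s) \<xi>)"
  unfolding walk_law_from_def
  by (simp add: map_bind_pmf bind_map_pmf pmf.map_comp o_def add.assoc[symmetric])

lemma pmf_map_add_left:
  fixes p :: "'a::group_add pmf"
  shows "pmf (map_pmf (\<lambda>s. z + s) p) y = pmf p (- z + y)"
proof -
  have "pmf (map_pmf (\<lambda>s. z + s) p) (z + (- z + y)) = pmf p (- z + y)"
    by (rule pmf_map_inj') (simp add: inj_def)
  then show ?thesis by (simp add: add.assoc[symmetric])
qed

lemma ennreal_pmf_walk_law_from_Suc:
  "ennreal (pmf (walk_law_from \<xi> a (Suc n)) y)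
    = (\<integral>\<^sup>+z. ennreal (pmf (walk_law_from \<xi> a n) z) * ennreal (pmf \<xi> (y - z)) \<partial>count_space UNIV)"
  unfolding walk_law_from_Suc ennreal_pmf_bind nn_integral_measure_pmf pmf_map_add_left
  by (simp add: algebra_simps)

lemma pmf_walk_law_from_0: "pmf (walk_law_from \<xi> a 0) y = (if y = a then 1 else 0)"
  unfolding walk_law_from_def by (simp add: pmf_return)

lemma pmf_walk_law_from_start: "pmf (walk_law_from \<xi> x n) x = pmf (walk_law_from \<xi> 0 n) 0"
  unfolding walk_law_from_def using pmf_map_add_left[of _ "walk_law \<xi> n"] by simp

lemma nn_integral_pmf_UNIV: "(\<integral>\<^sup>+y. ennreal (pmf p y) \<partial>count_space UNIV) = 1"
  using measure_pmf.emeasure_space_1[of p] by (simp add: nn_integral_pmf)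

text \<open>\<open>taboo_prob \<xi> x n y\<close> is P^0{X_n = y and X_k \<noteq> x for all k \<le> n}, and
  \<open>first_hit_prob \<xi> x n\<close> is P^0{the first k with X_k = x is n}.\<close>

primrec taboo_prob :: "(int ^ 'd) pmf \<Rightarrow> int ^ 'd \<Rightarrow> nat \<Rightarrow> int ^ 'd \<Rightarrow> ennreal" where
  "taboo_prob \<xi> x 0 y = (if y = 0 \<and> y \<noteq> x then 1 else 0)"
| "taboo_prob \<xi> x (Suc n) y =
     (if y \<noteq> x then \<integral>\<^sup>+z. taboo_prob \<xi> x n z * ennreal (pmf \<xi> (y - z)) \<partial>count_space UNIV else 0)"

primrec first_hit_prob :: "(int ^ 'd) pmf \<Rightarrow> int ^ 'd \<Rightarrow> nat \<Rightarrow> ennreal" where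
  "first_hit_prob \<xi> x 0 = (if x = 0 then 1 else 0)"
| "first_hit_prob \<xi> x (Suc n) =
     (\<integral>\<^sup>+z. taboo_prob \<xi> x n z * ennreal (pmf \<xi> (x - z)) \<partial>count_space UNIV)"

lemma walk_law_first_entrance_decomposition:
  "ennreal (pmf (walk_law_from \<xi> 0 n) y) = taboo_prob \<xi> x n y
     + (\<Sum>k\<le>n. first_hit_prob \<xi> x k * ennreal (pmf (walk_law_from \<xi> x (n - k)) y))"
proof (induction n arbitrary: y)
  case 0
  then show ?case by (auto simp: pmf_walk_law_from_0)
next
  case (Suc n)
  define K where "K z = ennreal (pmf \<xi> (y - z))" for z
  define P where "P m z = ennreal (pmf (walk_law_from \<xi> x m) z)" for m z
  have "ennreal (pmf (walk_law_from \<xi> 0 (Suc n)) y)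
     = (\<integral>\<^sup>+z. (taboo_prob \<xi> x n z + (\<Sum>k\<le>n. first_hit_prob \<xi> x k * P (n - k) z)) * K z
          \<partial>count_space UNIV)"
    unfolding ennreal_pmf_walk_law_from_Suc Suc K_def P_def ..
  also have "\<dots> = (\<integral>\<^sup>+z. taboo_prob \<xi> x n z * K z \<partial>count_space UNIV)
      + (\<integral>\<^sup>+z. (\<Sum>k\<le>n. first_hit_prob \<xi> x k * (P (n - k) z * K z)) \<partial>count_space UNIV)"
    by (subst nn_integral_add[symmetric]) (auto simp: distrib_right sum_distrib_right mult.assoc)
  also have "(\<integral>\<^sup>+z. (\<Sum>k\<le>n. first_hit_prob \<xi> x k * (P (n - k) z * K z)) \<partial>count_space UNIV)
      = (\<Sum>k\<le>n. first_hit_prob \<xi> x k * P (Suc n - k) y)"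
    by (simp add: nn_integral_sum nn_integral_cmult)
       (simp add: Suc_diff_le ennreal_pmf_walk_law_from_Suc K_def P_def)
  also have "(\<integral>\<^sup>+z. taboo_prob \<xi> x n z * K z \<partial>count_space UNIV)
     = taboo_prob \<xi> x (Suc n) y + first_hit_prob \<xi> x (Suc n) * P 0 y"
    by (cases "y = x") (auto simp: pmf_walk_law_from_0 K_def P_def)
  finally show ?case by (simp add: P_def add_ac)
qed

lemma sum_first_hit_prob_le_1: "(\<Sum>k\<le>n. first_hit_prob \<xi> x k) \<le> 1"
proof -
  have "(\<Sum>k\<le>n. first_hit_prob \<xi> x k) = (\<Sum>k\<le>n. first_hit_prob \<xi> x k *
          (\<integral>\<^sup>+y. ennreal (pmf (walk_law_from \<xi> x (n - k)) y) \<partial>count_space UNIV))"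
    by (simp add: nn_integral_pmf_UNIV)
  also have "\<dots> = (\<integral>\<^sup>+y. (\<Sum>k\<le>n. first_hit_prob \<xi> x k * ennreal (pmf (walk_law_from \<xi> x (n - k)) y))
                     \<partial>count_space UNIV)"
    by (subst nn_integral_sum) (auto simp: nn_integral_cmult)
  also have "\<dots> \<le> (\<integral>\<^sup>+y. ennreal (pmf (walk_law_from \<xi> 0 n) y) \<partial>count_space UNIV)"
    by (rule nn_integral_mono) (simp add: walk_law_first_entrance_decomposition[of \<xi> n _ x])
  also have "\<dots> = 1" by (rule nn_integral_pmf_UNIV)
  finally show ?thesis .
qed

lemma green_le_green_origin: "green \<xi> 0 x \<le> green \<xi> 0 0"
proof (cases "x = 0")
  case False
  define q where "q j = ennreal (pmf (walk_law_from \<xi> 0 j) 0)" for j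
  define f where "f k = first_hit_prob \<xi> x k" for k
  have no_taboo: "taboo_prob \<xi> x n x = 0" for n using False by (cases n) auto
  have pmf_x: "ennreal (pmf (walk_law_from \<xi> 0 n) x) = (\<Sum>k\<le>n. f k * q (n - k))" for n
    using walk_law_first_entrance_decomposition[of \<xi> n x x]
    by (simp only: no_taboo pmf_walk_law_from_start[of \<xi> x] f_def q_def add_0_left)
  show ?thesis
    unfolding green_def q_def[symmetric]
  proof (rule suminf_le_const, simp)
    fix N
    have "(\<Sum>n<N. ennreal (pmf (walk_law_from \<xi> 0 n) x)) = (\<Sum>n<N. \<Sum>k\<le>n. f k * q (n - k))"
      by (simp add: pmf_x)
    also have "\<dots> = (\<Sum>(i,j)\<in>{(i,j). i+j < N}. f i * q j)"
      by (rule sum.triangle_reindex[symmetric])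
    also have "\<dots> \<le> (\<Sum>(i,j)\<in>{..<N} \<times> {..<N}. f i * q j)"
      by (rule sum_mono2) auto
    also have "\<dots> = (\<Sum>i<N. f i) * (\<Sum>j<N. q j)"
      by (simp add: sum_product sum.cartesian_product)
    also have "\<dots> \<le> 1 * (\<Sum>j. q j)"
    proof (rule mult_mono)
      have "(\<Sum>i<N. f i) \<le> (\<Sum>i\<le>N. f i)" by (rule sum_mono2) auto
      also have "\<dots> \<le> 1" unfolding f_def by (rule sum_first_hit_prob_le_1)
      finally show "(\<Sum>i<N. f i) \<le> 1" .
      show "(\<Sum>j<N. q j) \<le> (\<Sum>j. q j)" by (rule sum_le_suminf) auto
    qed auto
    finally show "(\<Sum>n<N. ennreal (pmf (walk_law_from \<xi> 0 n) x)) \<le> (\<Sum>n. q n)"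
      by simp
  qed
qed simp

lemma one_le_green_origin: "1 \<le> green \<xi> 0 0"
proof -
  have "(\<Sum>n<1. ennreal (pmf (walk_law_from \<xi> 0 n) 0)) \<le> green \<xi> 0 0"
    unfolding green_def by (rule sum_le_suminf) auto
  then show ?thesis by (simp add: pmf_walk_law_from_0)
qed

lemma Vbox_mono: "n \<le> m \<Longrightarrow> Vbox n \<subseteq> Vbox m"
proof -
  assume "n \<le> m"
  then have "(2::int) ^ n \<le> 2 ^ m" by (rule power_increasing) simp
  then have "- (2 ^ n) \<le> y \<and> y < 2 ^ n \<Longrightarrow> - (2 ^ m) \<le> y \<and> y < 2 ^ m" for y :: int
    by linarith
  then show ?thesis unfolding Vbox_def by blast
qed

lemma zero_in_Vbox: "0 \<in> Vbox n"
  unfolding Vbox_def by simp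

lemma vec_nth_Vbox_subset:
  "vec_nth ` (Vbox n :: (int ^ 'd) set) \<subseteq> (\<Pi>\<^sub>E i\<in>(UNIV::'d set). {-(2^n)..<2^n})"
  unfolding Vbox_def by auto

lemma finite_Vbox: "finite (Vbox n :: (int ^ 'd) set)"
proof -
  have "finite (vec_nth ` (Vbox n :: (int ^ 'd) set))"
    by (rule finite_subset[OF vec_nth_Vbox_subset]) (auto intro: finite_PiE)
  then show ?thesis by (rule finite_imageD) (auto simp: inj_on_def vec_nth_inject)
qed

lemma card_Vbox_le: "real (card (Vbox n :: (int ^ 'd) set)) \<le> 2 ^ CARD('d) * 2 powr (CARD('d) * n)"
proof -
  have "card (Vbox n :: (int ^ 'd) set) = card (vec_nth ` (Vbox n :: (int ^ 'd) set))"
    by (rule card_image[symmetric]) (auto simp: inj_on_def vec_nth_inject)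
  also have "\<dots> \<le> card (\<Pi>\<^sub>E i\<in>(UNIV::'d set). {-(2^n)..<(2::int)^n})"
    by (rule card_mono[OF _ vec_nth_Vbox_subset]) (auto intro: finite_PiE)
  also have "\<dots> = (2 ^ (n + 1)) ^ CARD('d)"
    by (simp add: card_PiE nat_mult_distrib nat_power_eq)
  finally have "real (card (Vbox n :: (int ^ 'd) set)) \<le> (2 ^ (n + 1)) ^ CARD('d)"
    by (metis of_nat_le_iff of_nat_numeral of_nat_power)
  also have "\<dots> = 2 ^ CARD('d) * 2 powr (CARD('d) * n)"
    by (simp add: powr_realpow[symmetric] powr_powr powr_add[symmetric] algebra_simps)
  finally show ?thesis .
qed

lemma ex_Vbox_mem: "\<exists>n. (x :: int ^ 'd) \<in> Vbox n"
proof -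
  define s where "s = nat (\<Sum>j\<in>UNIV. \<bar>x $ j\<bar>)"
  have abs_less: "\<bar>x $ i\<bar> < 2 ^ s" for i
  proof -
    have "\<bar>x $ i\<bar> \<le> (\<Sum>j\<in>UNIV. \<bar>x $ j\<bar>)" by (rule member_le_sum) auto
    also have "\<dots> = int s" unfolding s_def by (simp add: sum_nonneg)
    also have "\<dots> < int (2 ^ s)" using less_exp[of s] by linarith
    finally show ?thesis by simp
  qed
  then have "- (2 ^ s) \<le> x $ i \<and> x $ i < 2 ^ s" for i
    using abs_less[of i] by arith
  then have "x \<in> Vbox s" unfolding Vbox_def by blast
  then show ?thesis ..
qed

lemma finite_subset_Vbox: "finite (F :: (int ^ 'd) set) \<Longrightarrow> \<exists>n. F \<subseteq> Vbox n"
proof (induction F rule: finite_induct)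
  case (insert x F)
  then obtain n where "F \<subseteq> Vbox n" by blast
  moreover obtain m where "x \<in> Vbox m" using ex_Vbox_mem by blast
  ultimately have "insert x F \<subseteq> Vbox (max n m)"
    using Vbox_mono[of n "max n m"] Vbox_mono[of m "max n m"] by auto
  then show ?case ..
qed simp

lemma abs_le_znorm: "real_of_int \<bar>x $ i\<bar> \<le> znorm x"
  unfolding znorm_def using component_le_norm_cart[of "\<chi> i. real_of_int (x $ i)" i] by simp

lemma znorm_pos: "x \<noteq> 0 \<Longrightarrow> 0 < znorm x"
  using abs_le_znorm[of x] by (metis vec_eq_iff zero_index of_int_pos zero_less_abs_iff order_less_le_trans)

lemma znorm_le_Vbox: "x \<in> Vbox n \<Longrightarrow> znorm (x :: int ^ 'd) \<le> CARD('d) * 2 ^ n"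
proof -
  assume x: "x \<in> Vbox n"
  have "znorm x \<le> (\<Sum>i\<in>UNIV. \<bar>(\<chi> i. real_of_int (x $ i)) $ i\<bar>)"
    unfolding znorm_def by (rule norm_le_l1_cart)
  also have "\<dots> \<le> (\<Sum>i\<in>(UNIV::'d set). 2 ^ n)"
  proof (rule sum_mono)
    fix i
    have "- (2 ^ n) \<le> x $ i \<and> x $ i < 2 ^ n" using x unfolding Vbox_def by blast
    then have "\<bar>x $ i\<bar> \<le> 2 ^ n" by linarith
    then show "\<bar>(\<chi> i. real_of_int (x $ i)) $ i\<bar> \<le> 2 ^ n"
      by (metis of_int_le_iff of_int_numeral of_int_power vec_lambda_beta of_int_abs)
  qed
  finally show ?thesis by simp
qed

lemma ex_Vbox_mem_le_znorm:
  assumes "x \<noteq> 0" "x \<in> Vbox M"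
  shows "\<exists>m\<le>M. x \<in> Vbox m \<and> 2 ^ m \<le> 2 * znorm (x :: int ^ 'd)"
proof -
  define m where "m = (LEAST m. x \<in> Vbox m)"
  have "x \<in> Vbox m" "m \<le> M"
    unfolding m_def by (rule LeastI[of _ M] Least_le; fact assms(2))+
  moreover have "2 ^ m \<le> 2 * znorm x"
  proof (cases m)
    case 0
    obtain i where "x $ i \<noteq> 0" using assms(1) by (metis vec_eq_iff zero_index)
    then have "1 \<le> real_of_int \<bar>x $ i\<bar>" by simp
    with abs_le_znorm[of x i] 0 show ?thesis by simp
  next
    case (Suc k)
    then have "x \<notin> Vbox k" unfolding m_def by (metis lessI not_less_Least)
    then obtain i where "\<not> (- (2 ^ k) \<le> x $ i \<and> x $ i < 2 ^ k)" unfolding Vbox_def by blast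
    then have "2 ^ k \<le> \<bar>x $ i\<bar>" by linarith
    then have "2 ^ k \<le> real_of_int \<bar>x $ i\<bar>" by (metis of_int_le_iff of_int_numeral of_int_power)
    with abs_le_znorm[of x i] Suc show ?thesis by simp
  qed
  ultimately show ?thesis by blast
qed

lemma znorm_powr_le_dyadic_sum:
  assumes "0 \<le> \<gamma>" "x \<noteq> 0" "x \<in> Vbox M"
  shows "znorm (x :: int ^ 'd) powr (- \<gamma>)
           \<le> 2 powr \<gamma> * (\<Sum>n\<le>M. of_bool (x \<in> Vbox n) * 2 powr (- (\<gamma> * n)))"
proof -
  obtain m where m: "m \<le> M" "x \<in> Vbox m" "2 ^ m \<le> 2 * znorm x"
    using ex_Vbox_mem_le_znorm[OF assms(2,3)] by blast
  have "znorm x powr (- \<gamma>) \<le> (2 powr (real m - 1)) powr (- \<gamma>)"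
    using m(3) assms(1) by (intro powr_mono2') (auto simp: powr_diff powr_realpow)
  also have "\<dots> = 2 powr \<gamma> * 2 powr (- (\<gamma> * m))"
    by (simp add: powr_powr powr_add[symmetric] algebra_simps)
  also have "2 powr (- (\<gamma> * m)) \<le> (\<Sum>n\<le>M. of_bool (x \<in> Vbox n) * 2 powr (- (\<gamma> * n)))"
    using member_le_sum[of m "{..M}" "\<lambda>n. of_bool (x \<in> Vbox n) * 2 powr (- (\<gamma> * n))"] m
    by simp
  finally show ?thesis by simp
qed

lemma limsup_log_rate_le:
  fixes U :: "nat \<Rightarrow> real"
  assumes "0 < C" and "\<And>n. 0 < U n" and "\<And>n. U n \<le> C * 2 powr (c * n)"
  shows "limsup (\<lambda>n. ereal (log 2 (U n) / n)) \<le> c"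
proof -
  have "eventually (\<lambda>n. ereal (log 2 (U n) / n) \<le> ereal (c + log 2 C / n)) sequentially"
    using eventually_ge_at_top[of "1::nat"]
  proof eventually_elim
    case (elim n)
    have "log 2 (U n) \<le> log 2 (C * 2 powr (c * n))"
      using assms by (intro log_mono) auto
    also have "\<dots> = log 2 C + c * n"
      using assms(1) by (simp add: log_mult)
    finally have "log 2 (U n) / n \<le> (log 2 C + c * n) / n"
      using elim by (intro divide_right_mono) auto
    also have "\<dots> = c + log 2 C / n" using elim by (simp add: field_simps)
    finally show ?case by simp
  qed
  then have "limsup (\<lambda>n. ereal (log 2 (U n) / n)) \<le> limsup (\<lambda>n. ereal (c + log 2 C / n))"
    by (rule Limsup_mono)
  also have "\<dots> = c"
    by (intro lim_imp_Limsup tendsto_ereal) (auto intro!: tendsto_eq_intros lim_const_over_n)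
  finally show ?thesis .
qed

lemma limsup_log_rate_nonneg:
  fixes U :: "nat \<Rightarrow> real"
  assumes "0 < c" and "\<And>n. c \<le> U n"
  shows "0 \<le> limsup (\<lambda>n. ereal (log 2 (U n) / n))"
proof -
  have "0 = limsup (\<lambda>n. ereal (log 2 c / n))"
    by (subst zero_ereal_def, intro lim_imp_Limsup[symmetric] tendsto_ereal lim_const_over_n) simp
  also have "\<dots> \<le> limsup (\<lambda>n. ereal (log 2 (U n) / n))"
  proof (intro Limsup_mono always_eventually allI)
    fix n
    have "log 2 c \<le> log 2 (U n)" using assms by (intro log_mono) auto
    then show "ereal (log 2 c / n) \<le> ereal (log 2 (U n) / n)" by (simp add: divide_right_mono)
  qed
  finally show ?thesis .
qed

lemma exponential_bound_of_limsup_less: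
  fixes U :: "nat \<Rightarrow> real"
  assumes pos: "\<And>n. 0 < U n" and less: "limsup (\<lambda>n. ereal (log 2 (U n) / n)) < \<beta>"
  obtains C where "0 < C" "\<And>n. U n \<le> C * 2 powr (\<beta> * n)"
proof -
  obtain N where N: "\<And>n. N \<le> n \<Longrightarrow> log 2 (U n) / n < \<beta>"
    using Limsup_lessD[OF less] by (auto simp: eventually_sequentially)
  define C where "C = 1 + (\<Sum>n\<le>N. U n * 2 powr (- (\<beta> * n)))"
  have "0 \<le> (\<Sum>n\<le>N. U n * 2 powr (- (\<beta> * n)))"
    using pos by (intro sum_nonneg) (simp add: less_imp_le)
  then have "1 \<le> C" unfolding C_def by simp
  have "U n \<le> C * 2 powr (\<beta> * n)" for n
  proof (cases "n \<le> N")
    case True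
    have "U n = U n * 2 powr (- (\<beta> * n)) * 2 powr (\<beta> * n)"
      by (simp add: powr_minus field_simps)
    also have "U n * 2 powr (- (\<beta> * n)) \<le> C"
      unfolding C_def using True pos
      by (intro add_increasing order.refl member_le_sum) (auto simp: less_imp_le)
    finally show ?thesis by simp
  next
    case False
    then have "log 2 (U n) < \<beta> * n" using N[of n] by (simp add: divide_less_eq)
    then have "U n < 2 powr (\<beta> * n)"
      using pos[of n] by (simp add: log_less_iff)
    also have "\<dots> \<le> C * 2 powr (\<beta> * n)" using \<open>1 \<le> C\<close> by simp
    finally show ?thesis by simp
  qed
  moreover have "0 < C" using \<open>1 \<le> C\<close> by simp
  ultimately show ?thesis using that by blast
qed

lemma if_empty_Inf_eq_threshold:
  fixes l d :: real
  assumes "l \<le> d" and "T \<subseteq> {..<d}"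
    and above: "\<And>\<gamma>. \<gamma> \<in> T \<Longrightarrow> l \<le> \<gamma>" and below: "\<And>\<gamma>. l < \<gamma> \<Longrightarrow> \<gamma> < d \<Longrightarrow> \<gamma> \<in> T"
  shows "(if T = {} then d else Inf T) = l"
proof (cases "T = {}")
  case True
  then have "\<not> l < d" using below[of "(l + d) / 2"] by auto
  with True assms(1) show ?thesis by simp
next
  case False
  then obtain t where "t \<in> T" by blast
  then have "l < d" using above assms(2) by fastforce
  have "l \<le> Inf T" using False above by (rule cInf_greatest)
  moreover have "\<not> l < Inf T"
  proof
    assume "l < Inf T"
    define t where "t = (l + min (Inf T) d) / 2"
    have "t \<in> T" using \<open>l < Inf T\<close> \<open>l < d\<close> unfolding t_def by (intro below) auto
    then have "Inf T \<le> t" using above by (intro cInf_lower bdd_belowI)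
    with \<open>l < Inf T\<close> \<open>l < d\<close> show False unfolding t_def by simp
  qed
  ultimately show ?thesis using False by simp
qed

locale bounded_weight =
  fixes h :: "int ^ 'd \<Rightarrow> real" and K :: real
  assumes nonneg: "0 \<le> h x" and bounded: "h x \<le> K" and pos_origin: "0 < h 0"
begin

definition box_sum :: "nat \<Rightarrow> real" where
  "box_sum n = sum h (Vbox n)"

definition growth_rate :: ereal where
  "growth_rate = limsup (\<lambda>n. ereal (log 2 (box_sum n) / n))"

definition weighted_series :: "real \<Rightarrow> ennreal" where
  "weighted_series \<gamma> = (\<Sum>\<^sub>\<infinity>x\<in>UNIV - {0}. ennreal (h x * znorm x powr (- \<gamma>)))"

definition critical_exponent :: real where
  "critical_exponent = (let S = {\<gamma> \<in> {0<..<real CARD('d)}. weighted_series \<gamma> < \<infinity>}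
     in if S = {} then real CARD('d) else Inf S)"

lemma origin_le_box_sum: "h 0 \<le> box_sum n"
  unfolding box_sum_def by (rule member_le_sum) (auto simp: nonneg zero_in_Vbox finite_Vbox)

lemma box_sum_pos: "0 < box_sum n"
  using pos_origin origin_le_box_sum by (rule less_le_trans)

lemma box_sum_le: "box_sum n \<le> K * 2 ^ CARD('d) * 2 powr (CARD('d) * n)"
proof -
  have "box_sum n \<le> (\<Sum>x\<in>(Vbox n :: (int ^ 'd) set). K)"
    unfolding box_sum_def by (intro sum_mono bounded)
  also have "\<dots> = card (Vbox n :: (int ^ 'd) set) * K" by simp
  also have "\<dots> \<le> 2 ^ CARD('d) * 2 powr (CARD('d) * n) * K"
    using card_Vbox_le bounded[of 0] pos_origin by (intro mult_right_mono) auto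
  finally show ?thesis by (simp add: algebra_simps)
qed

lemma growth_rate_nonneg: "0 \<le> growth_rate"
  unfolding growth_rate_def using pos_origin origin_le_box_sum by (rule limsup_log_rate_nonneg)

lemma growth_rate_le_dim: "growth_rate \<le> CARD('d)"
  unfolding growth_rate_def
  using bounded[of 0] pos_origin box_sum_pos box_sum_le
  by (intro limsup_log_rate_le[where C = "K * 2 ^ CARD('d)"]) (auto simp: mult.assoc)

lemma sum_le_weighted_series:
  assumes "finite F" "0 \<notin> F"
  shows "ennreal (\<Sum>x\<in>F. h x * znorm x powr (- \<gamma>)) \<le> weighted_series \<gamma>"
proof -
  have "ennreal (\<Sum>x\<in>F. h x * znorm x powr (- \<gamma>)) = (\<Sum>x\<in>F. ennreal (h x * znorm x powr (- \<gamma>)))"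
    by (rule sum_ennreal[symmetric]) (simp add: nonneg)
  also have "\<dots> = (\<Sum>\<^sub>\<infinity>x\<in>F. ennreal (h x * znorm x powr (- \<gamma>)))"
    using assms(1) by simp
  also have "\<dots> \<le> weighted_series \<gamma>"
    unfolding weighted_series_def
    by (rule infsum_mono_neutral) (use assms(2) in \<open>auto intro: nonneg_summable_on_complete\<close>)
  finally show ?thesis .
qed

text \<open>Since ||x|| \<le> d 2^n on V_n, each h x with x \<in> V_n - {0} is at most
  (d 2^n)^\<gamma> h x ||x||^-\<gamma>.\<close>

lemma box_sum_le_of_weighted_series_finite:
  assumes "0 \<le> \<gamma>" and "weighted_series \<gamma> < \<infinity>"
  shows "box_sum n \<le> (h 0 + enn2real (weighted_series \<gamma>) * CARD('d) powr \<gamma>) * 2 powr (\<gamma> * n)"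
proof -
  define S where "S = enn2real (weighted_series \<gamma>)"
  define d where "d = real CARD('d)"
  define A where "A = Vbox n - {0 :: int ^ 'd}"
  define B where "B = (d * 2 ^ n) powr \<gamma>"
  have "h x \<le> h x * znorm x powr (- \<gamma>) * B" if "x \<in> A" for x
  proof -
    have "0 < znorm x" using that znorm_pos unfolding A_def by blast
    then have "h x = h x * znorm x powr (- \<gamma>) * znorm x powr \<gamma>"
      by (simp add: powr_minus field_simps)
    also have "\<dots> \<le> h x * znorm x powr (- \<gamma>) * B"
      unfolding B_def d_def using that assms(1) \<open>0 < znorm x\<close> znorm_le_Vbox[of x n]
      by (intro mult_left_mono powr_mono2) (auto simp: A_def nonneg)
    finally show ?thesis .
  qed
  then have "sum h A \<le> (\<Sum>x\<in>A. h x * znorm x powr (- \<gamma>)) * B"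
    by (simp add: sum_distrib_right sum_mono)
  also have "(\<Sum>x\<in>A. h x * znorm x powr (- \<gamma>)) \<le> S"
  proof -
    have "ennreal (\<Sum>x\<in>A. h x * znorm x powr (- \<gamma>)) \<le> weighted_series \<gamma>"
      by (rule sum_le_weighted_series) (auto simp: A_def finite_Vbox)
    also have "\<dots> = ennreal S" unfolding S_def using assms(2) by simp
    finally show ?thesis by (simp add: S_def)
  qed
  finally have "sum h A \<le> S * B"
    unfolding B_def by (simp add: mult_right_mono)
  also have "B = d powr \<gamma> * 2 powr (\<gamma> * n)"
    unfolding B_def d_def by (simp add: powr_mult powr_realpow[symmetric] powr_powr mult.commute)
  finally have "sum h A \<le> S * d powr \<gamma> * 2 powr (\<gamma> * n)" by (simp add: mult.assoc)
  moreover have "h 0 \<le> h 0 * 2 powr (\<gamma> * n)"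
    using assms(1) pos_origin by (simp add: ge_one_powr_ge_zero)
  moreover have "box_sum n = h 0 + sum h A"
    unfolding box_sum_def A_def by (rule sum.remove) (auto simp: finite_Vbox zero_in_Vbox)
  ultimately show ?thesis unfolding S_def d_def by (simp add: algebra_simps)
qed

lemma growth_rate_le_of_weighted_series_finite:
  assumes "0 \<le> \<gamma>" and "weighted_series \<gamma> < \<infinity>"
  shows "growth_rate \<le> \<gamma>"
  unfolding growth_rate_def using pos_origin box_sum_pos box_sum_le_of_weighted_series_finite[OF assms]
  by (intro limsup_log_rate_le[where C = "h 0 + enn2real (weighted_series \<gamma>) * CARD('d) powr \<gamma>"])
     (auto intro: add_pos_nonneg)

lemma weighted_sum_Vbox_le_dyadic_sum:
  assumes "0 \<le> \<gamma>"
  shows "(\<Sum>x\<in>Vbox M - {0}. h x * znorm x powr (- \<gamma>))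
           \<le> 2 powr \<gamma> * (\<Sum>n\<le>M. 2 powr (- (\<gamma> * n)) * box_sum n)"
proof -
  define A where "A = Vbox M - {0 :: int ^ 'd}"
  define w where "w n = 2 powr (- (\<gamma> * real n))" for n :: nat
  have "(\<Sum>x\<in>A. h x * znorm x powr (- \<gamma>))
          \<le> (\<Sum>x\<in>A. h x * (2 powr \<gamma> * (\<Sum>n\<le>M. of_bool (x \<in> Vbox n) * w n)))"
    unfolding A_def w_def
    by (intro sum_mono mult_left_mono znorm_powr_le_dyadic_sum assms) (auto simp: nonneg)
  also have "\<dots> = 2 powr \<gamma> * (\<Sum>n\<le>M. w n * (\<Sum>x\<in>A. of_bool (x \<in> Vbox n) * h x))"
    by (simp only: sum_distrib_left mult_ac) (rule sum.swap)
  also have "\<dots> \<le> 2 powr \<gamma> * (\<Sum>n\<le>M. w n * box_sum n)"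
  proof -
    have "(\<Sum>x\<in>A. of_bool (x \<in> Vbox n) * h x) = sum h (A \<inter> Vbox n)" for n
      by (simp add: sum.inter_restrict A_def finite_Vbox if_distrib[of "\<lambda>c. c * _"])
    also have "sum h (A \<inter> Vbox n) \<le> box_sum n" for n
      unfolding box_sum_def by (rule sum_mono2) (auto simp: finite_Vbox nonneg)
    finally show ?thesis by (intro mult_left_mono sum_mono) (auto simp: w_def)
  qed
  finally show ?thesis unfolding A_def w_def .
qed

lemma weighted_sum_Vbox_le_geometric:
  assumes "0 \<le> \<gamma>" "\<beta> < \<gamma>" "0 < C" and bound: "\<And>n. box_sum n \<le> C * 2 powr (\<beta> * n)"
  shows "(\<Sum>x\<in>Vbox M - {0}. h x * znorm x powr (- \<gamma>)) \<le> 2 powr \<gamma> * (C / (1 - 2 powr (\<beta> - \<gamma>)))"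
proof -
  define r where "r = 2 powr (\<beta> - \<gamma>)"
  have "0 < r" "r < 1" unfolding r_def using \<open>\<beta> < \<gamma>\<close> powr_less_mono[of "\<beta> - \<gamma>" 0 2] by auto
  have "(\<Sum>x\<in>Vbox M - {0}. h x * znorm x powr (- \<gamma>))
          \<le> 2 powr \<gamma> * (\<Sum>n\<le>M. 2 powr (- (\<gamma> * n)) * box_sum n)"
    using assms(1) by (rule weighted_sum_Vbox_le_dyadic_sum)
  also have "(\<Sum>n\<le>M. 2 powr (- (\<gamma> * n)) * box_sum n) \<le> (\<Sum>n\<le>M. C * r ^ n)"
  proof (rule sum_mono)
    fix n
    have "2 powr (- (\<gamma> * n)) * box_sum n \<le> 2 powr (- (\<gamma> * n)) * (C * 2 powr (\<beta> * n))"
      by (intro mult_left_mono bound) auto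
    also have "\<dots> = C * r ^ n"
      unfolding r_def by (simp add: powr_power powr_add[symmetric] algebra_simps)
    finally show "2 powr (- (\<gamma> * n)) * box_sum n \<le> C * r ^ n" .
  qed
  also have "(\<Sum>n\<le>M. C * r ^ n) \<le> C * (\<Sum>n. r ^ n)"
    unfolding sum_distrib_left[symmetric] using \<open>0 < C\<close> \<open>0 < r\<close> \<open>r < 1\<close>
    by (intro mult_left_mono sum_le_suminf summable_geometric) auto
  also have "\<dots> = C / (1 - r)"
    using \<open>0 < r\<close> \<open>r < 1\<close> by (simp add: suminf_geometric divide_simps)
  finally show ?thesis unfolding r_def by (simp add: mult_left_mono)
qed

lemma weighted_series_finite_of_growth_rate_less:
  assumes "0 \<le> \<gamma>" and "growth_rate < \<gamma>"
  shows "weighted_series \<gamma> < \<infinity>"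
proof -
  obtain \<beta> where "growth_rate < ereal \<beta>" "\<beta> < \<gamma>"
    using ereal_dense2[OF assms(2)] by auto
  then obtain C where "0 < C" and C: "\<And>n. box_sum n \<le> C * 2 powr (\<beta> * n)"
    using exponential_bound_of_limsup_less box_sum_pos unfolding growth_rate_def by blast
  define B where "B = 2 powr \<gamma> * (C / (1 - 2 powr (\<beta> - \<gamma>)))"
  have "weighted_series \<gamma> \<le> ennreal B"
    unfolding weighted_series_def
  proof (rule infsum_le_finite_sums)
    show "(\<lambda>x. ennreal (h x * znorm x powr (- \<gamma>))) summable_on UNIV - {0}"
      by (rule nonneg_summable_on_complete) simp
    fix F :: "(int ^ 'd) set"
    assume F: "finite F" "F \<subseteq> UNIV - {0}"
    obtain M where "F \<subseteq> Vbox M" using finite_subset_Vbox[OF F(1)] by blast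
    have "(\<Sum>x\<in>F. h x * znorm x powr (- \<gamma>)) \<le> (\<Sum>x\<in>Vbox M - {0}. h x * znorm x powr (- \<gamma>))"
      using F \<open>F \<subseteq> Vbox M\<close> by (intro sum_mono2) (auto simp: finite_Vbox nonneg)
    also have "\<dots> \<le> B"
      unfolding B_def using assms(1) \<open>\<beta> < \<gamma>\<close> \<open>0 < C\<close> C by (rule weighted_sum_Vbox_le_geometric)
    finally show "(\<Sum>x\<in>F. ennreal (h x * znorm x powr (- \<gamma>))) \<le> ennreal B"
      by (simp add: sum_ennreal nonneg ennreal_leI)
  qed
  then show ?thesis by (rule order.strict_trans1) (simp add: ennreal_less_top)
qed

theorem critical_exponent_eq_growth_rate: "ereal critical_exponent = growth_rate"
proof -
  define l where "l = real_of_ereal growth_rate"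
  have l: "growth_rate = ereal l"
    unfolding l_def using growth_rate_nonneg growth_rate_le_dim by (cases growth_rate) auto
  have "critical_exponent = l"
    unfolding critical_exponent_def Let_def
  proof (rule if_empty_Inf_eq_threshold)
    show "l \<le> real CARD('d)" using growth_rate_le_dim l by simp
    show "\<gamma> \<in> {\<gamma> \<in> {0<..<real CARD('d)}. weighted_series \<gamma> < \<infinity>}"
      if "l < \<gamma>" "\<gamma> < real CARD('d)" for \<gamma>
      using that growth_rate_nonneg l weighted_series_finite_of_growth_rate_less[of \<gamma>] by auto
    show "{\<gamma> \<in> {0<..<real CARD('d)}. weighted_series \<gamma> < \<infinity>} \<subseteq> {..<real CARD('d)}"
      by auto
    show "l \<le> \<gamma>" if "\<gamma> \<in> {\<gamma> \<in> {0<..<real CARD('d)}. weighted_series \<gamma> < \<infinity>}" for \<gamma>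
      using that l growth_rate_le_of_weighted_series_finite[of \<gamma>] by simp
  qed
  then show ?thesis using l by simp
qed

end

lemma transient_green_eq_ennreal:
  "transient \<xi> \<Longrightarrow> green \<xi> a x = ennreal (enn2real (green \<xi> a x))"
  unfolding transient_def by (simp add: ennreal_enn2real_if)

lemma transient_bounded_weight:
  assumes "transient \<xi>"
  shows "bounded_weight (\<lambda>x. enn2real (green \<xi> 0 x)) (enn2real (green \<xi> 0 0))"
proof
  have finite: "green \<xi> 0 0 \<noteq> \<infinity>" using assms unfolding transient_def by blast
  show "enn2real (green \<xi> 0 x) \<le> enn2real (green \<xi> 0 0)" for x
    using finite green_le_green_origin by (intro enn2real_mono) (auto simp: top.not_eq_extremum)
  show "0 < enn2real (green \<xi> 0 0)"
    using finite one_le_green_origin[of \<xi>]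
    by (simp add: enn2real_positive_iff top.not_eq_extremum order_less_le_trans[OF zero_less_one])
qed simp

theorem proposition6p3:
  fixes \<xi> :: "(int ^ 'd) pmf"
  assumes "transient \<xi>"
  shows "ereal (gamma_c \<xi>)
           = limsup (\<lambda>n. ereal (log 2 (enn2real (Ufun \<xi> (Vbox n))) / real n))"
proof -
  define h where "h x = enn2real (green \<xi> 0 x)" for x
  interpret bounded_weight h "h 0"
    unfolding h_def using assms by (rule transient_bounded_weight)
  have green: "green \<xi> 0 x = ennreal (h x)" for x
    unfolding h_def using assms by (rule transient_green_eq_ennreal)
  have "Ufun \<xi> (Vbox n) = ennreal (box_sum n)" for n
    unfolding Ufun_def box_sum_def green infsum_finite[OF finite_Vbox] by (simp add: nonneg)
  then have "limsup (\<lambda>n. ereal (log 2 (enn2real (Ufun \<xi> (Vbox n))) / real n)) = growth_rate"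
    unfolding growth_rate_def by (simp add: box_sum_pos less_imp_le)
  moreover have "gamma_c \<xi> = critical_exponent"
    unfolding gamma_c_def critical_exponent_def weighted_series_def green
    by (simp add: ennreal_mult nonneg)
  ultimately show ?thesis using critical_exponent_eq_growth_rate by simp
qed

end
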